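(* Let $m$ be a positive integer and let $M$ be an $N\times N$ Hermitian matrix with zero diagonal whose off-diagonal entries are each either $0$ or an $m$-th root of unity, and suppose $M$ is weighted-walk-regular, i.e. $M^k$ has constant diagonal for every $k=1,\ldots,N-1$. Then the continuous quantum walk $U(t)=\exp(itM)$ is periodic at some vertex if and only if it is periodic at every vertex, and this happens if and only if all eigenvalues of $M$ are integer multiples of $\sqrt\Delta$ for some square-free positive integer $\Delta$.
   Context: The walk $U(t)=\exp(itM)$ is periodic at vertex $a$ if there exist a time $t\neq0$ and a complex number $\alpha$ with $U(t)e_a=\alpha e_a$, where $e_a$ is the standard basis vector. *)

theory Defs
  imports Complex_Main "HOL-Computational_Algebra.Squarefree" "Jordan_Normal_Form.Char_Poly"
begin

definition hermitian_mat :: "complex mat \<Rightarrow> bool" where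
  "hermitian_mat M \<longleftrightarrow> dim_col M = dim_row M \<and>
     (\<forall>i < dim_row M. \<forall>j < dim_row M. M $$ (j, i) = cnj (M $$ (i, j)))"

definition mat_exp :: "complex mat \<Rightarrow> complex mat" where
  "mat_exp A = mat (dim_row A) (dim_col A) (\<lambda>(i, j). \<Sum>k. (A ^\<^sub>m k) $$ (i, j) / of_nat (fact k))"

definition walk :: "complex mat \<Rightarrow> real \<Rightarrow> complex mat" where
  "walk M t = mat_exp ((\<i> * complex_of_real t) \<cdot>\<^sub>m M)"

definition periodic_at :: "complex mat \<Rightarrow> nat \<Rightarrow> bool" where
  "periodic_at M a \<longleftrightarrow> (\<exists>t::real. t \<noteq> 0 \<and> (\<exists>\<alpha>::complex.
      walk M t *\<^sub>v unit_vec (dim_row M) a = \<alpha> \<cdot>\<^sub>v unit_vec (dim_row M) a))"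

end

(* Diagonalise M = U diag(lam) U^* with U unitary. Then U(t) e_a = alpha e_a holds exactly when
   exp(i t lam_p) = alpha for every p with U_ap <> 0, i.e. for every eigenvalue whose eigenspace
   is not orthogonal to e_a. Walk-regularity makes the weight |E_lam e_a|^2 of an eigenvalue at a
   vertex independent of the vertex (it is a polynomial of degree < N in M, read off the diagonal),
   so every eigenvalue is seen from every vertex: periodicity at one vertex makes exp(i t lam)
   constant on the whole spectrum, which is periodicity at every vertex, and it puts all
   differences of eigenvalues into (2 pi / t) Z.
   Since tr M = 0, the eigenvalues are then integer multiples of one real number d, and since
   tr M^2 is an integer, d^2 is rational; so every eigenvalue is a rational multiple of sqrt Delta
   with Delta squarefree. Each eigenvalue is also an eigenvalue of the 0/1 adjacency matrix of the
   cover of the graph of M by the m-th roots of unity, so its square is an algebraic integer,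
   hence an integer, and the rational multiple is an integer. Conversely, if the spectrum lies in
   sqrt Delta Z then U(2 pi / sqrt Delta) = I. *)

theory Submission
  imports Defs "Jordan_Normal_Form.Schur_Decomposition"
begin

lemma mat_adjoint_complex: "mat_adjoint (A :: complex mat) = transpose_mat (map_mat cnj A)"
  by (rule eq_matI) (auto simp: mat_adjoint_def mat_of_rows_index)

lemma mat_adjoint_carrier [simp]:
  "A \<in> carrier_mat n m \<Longrightarrow> mat_adjoint (A :: complex mat) \<in> carrier_mat m n"
  by (simp add: mat_adjoint_complex)

lemma mat_adjoint_dim [simp]:
  "dim_row (mat_adjoint (A :: complex mat)) = dim_col A" "dim_col (mat_adjoint A) = dim_row A"
  by (simp_all add: mat_adjoint_complex)

lemma mat_adjoint_index [simp]:
  "i < dim_col A \<Longrightarrow> j < dim_row A \<Longrightarrow> mat_adjoint (A :: complex mat) $$ (i, j) = cnj (A $$ (j, i))"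
  by (simp add: mat_adjoint_complex)

lemma mat_adjoint_adjoint [simp]: "mat_adjoint (mat_adjoint (A :: complex mat)) = A"
  by (rule eq_matI) auto

lemma mat_adjoint_one [simp]: "mat_adjoint (1\<^sub>m n :: complex mat) = 1\<^sub>m n"
  by (rule eq_matI) auto

lemma mat_adjoint_zero [simp]: "mat_adjoint (0\<^sub>m n m :: complex mat) = 0\<^sub>m m n"
  by (rule eq_matI) auto

interpretation cnj_hom: semiring_hom cnj
  by unfold_locales auto

lemma mat_adjoint_mult:
  assumes "A \<in> carrier_mat n k" "B \<in> carrier_mat k m"
  shows "mat_adjoint (A * B :: complex mat) = mat_adjoint B * mat_adjoint A"
  using assms by (simp add: mat_adjoint_complex cnj_hom.mat_hom_mult transpose_mult[of _ n k])

lemma mat_adjoint_four_block: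
  assumes "A \<in> carrier_mat nr1 nc1" "B \<in> carrier_mat nr1 nc2"
    "C \<in> carrier_mat nr2 nc1" "D \<in> carrier_mat nr2 nc2"
  shows "mat_adjoint (four_block_mat A B C D :: complex mat) =
    four_block_mat (mat_adjoint A) (mat_adjoint C) (mat_adjoint B) (mat_adjoint D)"
  using assms by (simp add: mat_adjoint_complex map_four_block_mat transpose_four_block_mat)

lemma hermitian_mat_iff_adjoint:
  assumes A: "A \<in> carrier_mat n n"
  shows "hermitian_mat A \<longleftrightarrow> mat_adjoint A = A"
proof
  assume herm: "hermitian_mat A"
  show "mat_adjoint A = A"
  proof (rule eq_matI)
    fix i j assume "i < dim_row A" "j < dim_col A"
    then show "mat_adjoint A $$ (i, j) = A $$ (i, j)"
      using A herm unfolding hermitian_mat_def by (metis complex_cnj_cnj mat_adjoint_index)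
  qed (use A in auto)
next
  assume adj: "mat_adjoint A = A"
  have "A $$ (j, i) = cnj (A $$ (i, j))" if "i < n" "j < n" for i j
  proof -
    have "A $$ (j, i) = mat_adjoint A $$ (j, i)" by (simp add: adj)
    also have "\<dots> = cnj (A $$ (i, j))" using A that by simp
    finally show ?thesis .
  qed
  then show "hermitian_mat A"
    using A unfolding hermitian_mat_def by blast
qed

lemma hermitian_mat_unitary_conj:
  assumes W: "W \<in> carrier_mat n n" and A: "A \<in> carrier_mat n n" and herm: "hermitian_mat A"
  shows "hermitian_mat (mat_adjoint W * A * W)"
proof -
  have "mat_adjoint (mat_adjoint W * A * W) = mat_adjoint W * mat_adjoint (mat_adjoint W * A)"
    using W A by (intro mat_adjoint_mult[of _ n n _ n]) auto
  also have "mat_adjoint (mat_adjoint W * A) = A * W"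
    using W A herm by (simp add: mat_adjoint_mult[of _ n n _ n] hermitian_mat_iff_adjoint[of _ n])
  also have "mat_adjoint W * (A * W) = mat_adjoint W * A * W"
    using W A by (simp add: assoc_mult_mat[of _ n n _ n _ n])
  finally show ?thesis
    using W A by (subst hermitian_mat_iff_adjoint[where n = n]) auto
qed

lemma cscalar_prod_smult:
  assumes "x \<in> carrier_vec n" "y \<in> carrier_vec n"
  shows "(a \<cdot>\<^sub>v x) \<bullet>c (b \<cdot>\<^sub>v y) = a * cnj b * (x \<bullet>c y :: complex)"
  using assms unfolding scalar_prod_def by (auto simp: sum_distrib_left intro!: sum.cong)

definition normalize_vec :: "complex vec \<Rightarrow> complex vec" where
  "normalize_vec v = complex_of_real (1 / sqrt (Re (v \<bullet>c v))) \<cdot>\<^sub>v v"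

lemma cscalar_prod_self_real: "(v :: complex vec) \<bullet>c v = complex_of_real (Re (v \<bullet>c v))"
  using conjugate_square_ge_0_vec[of v] by (simp add: less_eq_complex_def complex_eq_iff)

lemma normalize_vec_cscalar_prod:
  assumes "u \<in> carrier_vec n" "w \<in> carrier_vec n"
  shows "normalize_vec u \<bullet>c normalize_vec w =
    complex_of_real (1 / (sqrt (Re (u \<bullet>c u)) * sqrt (Re (w \<bullet>c w)))) * (u \<bullet>c w)"
  unfolding normalize_vec_def cscalar_prod_smult[OF assms] by simp

lemma normalize_vec_unit:
  assumes "v \<in> carrier_vec n" "v \<noteq> 0\<^sub>v n"
  shows "normalize_vec v \<bullet>c normalize_vec v = 1"
proof -
  have "Re (v \<bullet>c v) \<noteq> 0"
    using assms cscalar_prod_self_real[of v] by (metis conjugate_square_eq_0_vec of_real_0)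
  moreover have "Re (v \<bullet>c v) \<ge> 0"
    using conjugate_square_ge_0_vec[of v] by (simp add: less_eq_complex_def)
  ultimately show ?thesis
    using assms by (subst cscalar_prod_self_real)
      (simp add: normalize_vec_cscalar_prod flip: of_real_mult)
qed

lemma normalize_vec_id: "v \<bullet>c v = 1 \<Longrightarrow> normalize_vec v = v"
  unfolding normalize_vec_def by simp

definition unitary_mat :: "nat \<Rightarrow> complex mat \<Rightarrow> bool" where
  "unitary_mat n U \<longleftrightarrow> U \<in> carrier_mat n n \<and> mat_adjoint U * U = 1\<^sub>m n"

lemma unitary_mat_carrier: "unitary_mat n U \<Longrightarrow> U \<in> carrier_mat n n"
  unfolding unitary_mat_def by simp

lemma unitary_mat_adjoint_left: "unitary_mat n U \<Longrightarrow> mat_adjoint U * U = 1\<^sub>m n"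
  unfolding unitary_mat_def by simp

lemma unitary_mat_adjoint_right: "unitary_mat n U \<Longrightarrow> U * mat_adjoint U = 1\<^sub>m n"
  unfolding unitary_mat_def using mat_mult_left_right_inverse mat_adjoint_carrier by blast

lemma unitary_mat_mult:
  assumes W: "unitary_mat n W" and V: "unitary_mat n V"
  shows "unitary_mat n (W * V)"
proof -
  have Wc: "W \<in> carrier_mat n n" and Vc: "V \<in> carrier_mat n n"
    using W V by (simp_all add: unitary_mat_carrier)
  have "mat_adjoint (W * V) * (W * V) = mat_adjoint V * (mat_adjoint W * W * V)"
    using Wc Vc by (simp add: mat_adjoint_mult[OF Wc Vc] assoc_mult_mat[of _ n n _ n _ n])
  also have "\<dots> = 1\<^sub>m n"
    using Vc by (simp add: unitary_mat_adjoint_left[OF W] unitary_mat_adjoint_left[OF V])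
  finally show ?thesis unfolding unitary_mat_def using Wc Vc by simp
qed

lemma mult_four_block_diag:
  assumes "A \<in> carrier_mat n1 n1" "B \<in> carrier_mat n2 n2"
    "C \<in> carrier_mat n1 n1" "D \<in> carrier_mat n2 n2"
  shows "four_block_mat A (0\<^sub>m n1 n2) (0\<^sub>m n2 n1) B * four_block_mat C (0\<^sub>m n1 n2) (0\<^sub>m n2 n1) D =
    four_block_mat (A * C) (0\<^sub>m n1 n2) (0\<^sub>m n2 n1) (B * D :: 'a :: semiring_1 mat)"
  using assms by (simp add: mult_four_block_mat[OF assms(1) zero_carrier_mat zero_carrier_mat assms(2)
        assms(3) zero_carrier_mat zero_carrier_mat assms(4)])

lemma unitary_mat_four_block:
  assumes U: "unitary_mat n U"
  shows "unitary_mat (Suc n) (four_block_mat (1\<^sub>m 1) (0\<^sub>m 1 n) (0\<^sub>m n 1) U)"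
proof -
  have Uc: "U \<in> carrier_mat n n" by (rule unitary_mat_carrier[OF U])
  have "mat_adjoint (four_block_mat (1\<^sub>m 1) (0\<^sub>m 1 n) (0\<^sub>m n 1) U) *
      four_block_mat (1\<^sub>m 1) (0\<^sub>m 1 n) (0\<^sub>m n 1) U =
    four_block_mat (1\<^sub>m 1) (0\<^sub>m 1 n) (0\<^sub>m n 1) (mat_adjoint U) *
      four_block_mat (1\<^sub>m 1) (0\<^sub>m 1 n) (0\<^sub>m n 1) U"
    by (subst mat_adjoint_four_block[OF one_carrier_mat zero_carrier_mat zero_carrier_mat Uc]) simp
  also have "\<dots> = four_block_mat (1\<^sub>m 1) (0\<^sub>m 1 n) (0\<^sub>m n 1) (1\<^sub>m n)"
    using Uc by (subst mult_four_block_diag) (simp_all add: unitary_mat_adjoint_left[OF U])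
  also have "\<dots> = 1\<^sub>m (Suc n)" by simp
  finally show ?thesis
    unfolding unitary_mat_def using four_block_carrier_mat[OF one_carrier_mat[of 1] Uc] by simp
qed

lemma unitary_mat_of_cols:
  assumes ws: "set ws \<subseteq> carrier_vec n" "length ws = n"
    and orthonormal: "\<And>i j. i < n \<Longrightarrow> j < n \<Longrightarrow> ws ! i \<bullet>c ws ! j = (if i = j then 1 else 0)"
  shows "unitary_mat n (mat_of_cols n ws)"
proof -
  let ?W = "mat_of_cols n ws"
  have wsi: "ws ! i \<in> carrier_vec n" if "i < n" for i
    using ws that by auto
  have "(mat_adjoint ?W * ?W) $$ (i, j) = 1\<^sub>m n $$ (i, j)" if "i < n" "j < n" for i j
  proof -
    have "row (mat_adjoint ?W) i = conjugate (ws ! i)"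
      using that ws wsi[OF \<open>i < n\<close>] by (intro eq_vecI) (auto simp: mat_of_cols_index)
    then have "(mat_adjoint ?W * ?W) $$ (i, j) = conjugate (ws ! i) \<bullet> ws ! j"
      using that ws wsi[OF \<open>j < n\<close>] by simp
    also have "\<dots> = ws ! j \<bullet>c ws ! i"
      using that wsi by (intro conjugate_vec_sprod_comm[symmetric]) auto
    finally show ?thesis using that orthonormal by auto
  qed
  then show ?thesis
    unfolding unitary_mat_def using ws(2) by (auto intro!: eq_matI)
qed

lemma unitary_mat_first_col:
  assumes v: "v \<in> carrier_vec n" and unit: "v \<bullet>c v = 1"
  shows "\<exists>W. unitary_mat n W \<and> col W 0 = v"
proof -
  interpret cof_vec_space n "TYPE(complex)" .
  have v0: "v \<noteq> 0\<^sub>v n" using unit by auto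
  then have "n > 0" using v by (metis carrier_vecD gr_zeroI vec_of_dim_0)
  define us where "us = gram_schmidt n (basis_completion v)"
  note basis = basis_completion[OF v v0]
  note gs = gram_schmidt_result[OF basis(2) basis(4) basis(5) us_def]
  obtain vs where "basis_completion v = v # vs"
    unfolding basis_completion_def Let_def by auto
  then have "hd us = v" unfolding us_def using v by simp
  define ws where "ws = map normalize_vec us"
  have len: "length us = n" using gs(4) basis(6) by simp
  have us: "\<And>i. i < n \<Longrightarrow> us ! i \<in> carrier_vec n" using gs(3) len by auto
  have "ws ! i \<bullet>c ws ! j = (if i = j then 1 else 0)" if "i < n" "j < n" for i j
  proof (cases "i = j")
    case True
    then have "us ! i \<noteq> 0\<^sub>v n" using corthogonalD[OF gs(2)] that len by fastforce
    then show ?thesis using True that len normalize_vec_unit[OF us] by (simp add: ws_def)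
  next
    case False
    then show ?thesis
      using that len corthogonalD[OF gs(2), of i j] normalize_vec_cscalar_prod[OF us us]
      by (simp add: ws_def)
  qed
  moreover have "set ws \<subseteq> carrier_vec n" using gs(3) by (auto simp: ws_def normalize_vec_def)
  moreover have "ws ! 0 = v"
    using \<open>n > 0\<close> len \<open>hd us = v\<close> normalize_vec_id[OF unit] by (cases us) (auto simp: ws_def)
  then have "col (mat_of_cols n ws) 0 = v"
    using \<open>n > 0\<close> len v by (simp add: ws_def)
  ultimately show ?thesis
    using len unitary_mat_of_cols[of ws n] unfolding ws_def by auto
qed

section \<open>Spectral theorem for Hermitian matrices\<close>

lemma unit_eigenvector_exists:
  fixes A :: "complex mat"
  assumes A: "A \<in> carrier_mat (Suc n) (Suc n)"
  shows "\<exists>e v. v \<in> carrier_vec (Suc n) \<and> v \<bullet>c v = 1 \<and> A *\<^sub>v v = e \<cdot>\<^sub>v v"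
proof -
  obtain es where es: "char_poly A = (\<Prod>a\<leftarrow>es. [:- a, 1:])" "length es = Suc n"
    using char_poly_factorized[OF A] by blast
  then have "eigenvalue A (hd es)"
    unfolding eigenvalue_root_char_poly[OF A] by (cases es) auto
  then obtain v where v: "v \<in> carrier_vec (Suc n)" "v \<noteq> 0\<^sub>v (Suc n)" "A *\<^sub>v v = hd es \<cdot>\<^sub>v v"
    using A unfolding eigenvalue_def eigenvector_def by auto
  have "A *\<^sub>v normalize_vec v = hd es \<cdot>\<^sub>v normalize_vec v"
    unfolding normalize_vec_def using A v by (simp add: mult_mat_vec smult_smult_assoc mult.commute)
  moreover have "normalize_vec v \<in> carrier_vec (Suc n)"
    using v by (simp add: normalize_vec_def)
  ultimately show ?thesis
    using normalize_vec_unit[OF v(1,2)] by blast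
qed

lemma mat_diag_dim_row_col [simp]: "dim_row (mat_diag n f) = n" "dim_col (mat_diag n f) = n"
  by (simp_all add: mat_diag_def)

lemma mat_diag_Suc:
  "mat_diag (Suc n) f =
    four_block_mat (mat_diag 1 (\<lambda>_. f 0)) (0\<^sub>m 1 n) (0\<^sub>m n 1) (mat_diag n (\<lambda>i. f (Suc i)))"
  by (rule eq_matI) (auto simp: mat_diag_def)

lemma hermitian_mat_split_first_col:
  assumes A: "A \<in> carrier_mat (Suc n) (Suc n)" and herm: "hermitian_mat A"
    and col: "col A 0 = e \<cdot>\<^sub>v unit_vec (Suc n) 0"
  shows "\<exists>r B. B \<in> carrier_mat n n \<and> hermitian_mat B \<and>
    A = four_block_mat (mat_diag 1 (\<lambda>_. complex_of_real r)) (0\<^sub>m 1 n) (0\<^sub>m n 1) B"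
proof -
  have "dim_row A = Suc n" using A by simp
  then have sym: "A $$ (j, i) = cnj (A $$ (i, j))" if "i < Suc n" "j < Suc n" for i j
    using herm that unfolding hermitian_mat_def \<open>dim_row A = Suc n\<close> by blast
  have col0: "A $$ (i, 0) = (if i = 0 then e else 0)" if "i < Suc n" for i
    using arg_cong[OF col, of "\<lambda>v. v $ i"] that A by auto
  then have "cnj e = e" using sym[of 0 0] by (metis zero_less_Suc)
  define r where "r = Re e"
  have e: "complex_of_real r = e" using \<open>cnj e = e\<close> by (simp add: r_def complex_eq_iff)
  have row0: "A $$ (0, j) = (if j = 0 then e else 0)" if "j < Suc n" for j
  proof -
    have "A $$ (0, j) = cnj (A $$ (j, 0))" using sym[of j 0] that by blast
    also have "\<dots> = (if j = 0 then e else 0)" using col0[OF that] \<open>cnj e = e\<close> by simp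
    finally show ?thesis .
  qed
  define B where "B = mat n n (\<lambda>(i, j). A $$ (Suc i, Suc j))"
  let ?A = "four_block_mat (mat_diag 1 (\<lambda>_. complex_of_real r)) (0\<^sub>m 1 n) (0\<^sub>m n 1) B"
  have "hermitian_mat B"
    unfolding hermitian_mat_def B_def by (auto intro!: sym)
  moreover have "A = ?A"
  proof (rule eq_matI)
    fix i j assume "i < dim_row ?A" "j < dim_col ?A"
    then have "i < Suc n" "j < Suc n" by (simp_all add: B_def mat_diag_def)
    then show "A $$ (i, j) = ?A $$ (i, j)"
      using row0 col0 by (cases i; cases j) (auto simp: B_def mat_diag_def e)
  qed (use A in \<open>auto simp: B_def mat_diag_def\<close>)
  moreover have "B \<in> carrier_mat n n" by (simp add: B_def)
  ultimately show ?thesis by blast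
qed

lemma unitary_conj_first_col:
  assumes W: "unitary_mat n W" and A: "A \<in> carrier_mat n n" and "n > 0"
    and eigen: "A *\<^sub>v col W 0 = e \<cdot>\<^sub>v col W 0"
  shows "col (mat_adjoint W * A * W) 0 = e \<cdot>\<^sub>v unit_vec n 0"
proof -
  have Wc: "W \<in> carrier_mat n n" by (rule unitary_mat_carrier[OF W])
  have adjW: "mat_adjoint W \<in> carrier_mat n n" using Wc by simp
  have colW: "col W 0 \<in> carrier_vec n" using col_dim[of W 0] Wc by simp
  have unit: "mat_adjoint W *\<^sub>v col W 0 = unit_vec n 0"
  proof -
    have "mat_adjoint W *\<^sub>v col W 0 = col (mat_adjoint W * W) 0"
      by (rule col_mult2[OF adjW Wc \<open>n > 0\<close>, symmetric])
    then show ?thesis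
      using \<open>n > 0\<close> by (simp add: unitary_mat_adjoint_left[OF W])
  qed
  have "col (mat_adjoint W * A * W) 0 = (mat_adjoint W * A) *\<^sub>v col W 0"
    by (rule col_mult2[OF mult_carrier_mat[OF adjW A] Wc \<open>n > 0\<close>])
  also have "\<dots> = mat_adjoint W *\<^sub>v (A *\<^sub>v col W 0)"
    by (rule assoc_mult_mat_vec[OF adjW A colW])
  also have "\<dots> = e \<cdot>\<^sub>v unit_vec n 0"
    by (simp add: eigen mult_mat_vec[OF adjW colW] unit)
  finally show ?thesis .
qed

lemma unitary_conj_inverse:
  assumes W: "unitary_mat n W" and A: "A \<in> carrier_mat n n"
  shows "W * (mat_adjoint W * A * W) * mat_adjoint W = A"
proof -
  have Wc: "W \<in> carrier_mat n n" by (rule unitary_mat_carrier[OF W])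
  have adjW: "mat_adjoint W \<in> carrier_mat n n" using Wc by simp
  have "W * (mat_adjoint W * A * W) = W * (mat_adjoint W * A) * W"
    by (rule assoc_mult_mat[OF Wc mult_carrier_mat[OF adjW A] Wc, symmetric])
  also have "W * (mat_adjoint W * A) = A"
    using assoc_mult_mat[OF Wc adjW A] A by (simp add: unitary_mat_adjoint_right[OF W])
  also have "A * W * mat_adjoint W = A"
    using assoc_mult_mat[OF A Wc adjW] A by (simp add: unitary_mat_adjoint_right[OF W])
  finally show ?thesis .
qed

lemma conj_adjoint_compose:
  fixes W V D :: "complex mat"
  assumes W: "W \<in> carrier_mat n n" and V: "V \<in> carrier_mat n n" and D: "D \<in> carrier_mat n n"
  shows "W * (V * D * mat_adjoint V) * mat_adjoint W = (W * V) * D * mat_adjoint (W * V)"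
proof -
  have adjV: "mat_adjoint V \<in> carrier_mat n n" using V by simp
  have adjW: "mat_adjoint W \<in> carrier_mat n n" using W by simp
  have "W * (V * D * mat_adjoint V) = W * (V * D) * mat_adjoint V"
    by (rule assoc_mult_mat[OF W mult_carrier_mat[OF V D] adjV, symmetric])
  also have "W * (V * D) = W * V * D"
    by (rule assoc_mult_mat[OF W V D, symmetric])
  also have "W * V * D * mat_adjoint V * mat_adjoint W =
      W * V * D * (mat_adjoint V * mat_adjoint W)"
    by (rule assoc_mult_mat[OF mult_carrier_mat[OF mult_carrier_mat[OF W V] D] adjV adjW])
  also have "mat_adjoint V * mat_adjoint W = mat_adjoint (W * V)"
    by (rule mat_adjoint_mult[OF W V, symmetric])
  finally show ?thesis .
qed

lemma four_block_unitary_conj_diag: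
  fixes U :: "complex mat"
  assumes U: "U \<in> carrier_mat n n"
  shows "four_block_mat (1\<^sub>m 1) (0\<^sub>m 1 n) (0\<^sub>m n 1) U * mat_diag (Suc n) f *
      mat_adjoint (four_block_mat (1\<^sub>m 1) (0\<^sub>m 1 n) (0\<^sub>m n 1) U) =
    four_block_mat (mat_diag 1 (\<lambda>_. f 0)) (0\<^sub>m 1 n) (0\<^sub>m n 1)
      (U * mat_diag n (\<lambda>i. f (Suc i)) * mat_adjoint U)"
proof -
  have UD: "U * mat_diag n (\<lambda>i. f (Suc i)) \<in> carrier_mat n n" using U by simp
  show ?thesis
    unfolding mat_diag_Suc
    using mult_four_block_diag[OF one_carrier_mat U mat_diag_dim mat_diag_dim]
      mult_four_block_diag[OF mat_diag_dim UD one_carrier_mat mat_adjoint_carrier[OF U]]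
    by (simp add: mat_adjoint_four_block[OF one_carrier_mat zero_carrier_mat zero_carrier_mat U])
qed

theorem hermitian_mat_unitary_diagonalization:
  assumes "A \<in> carrier_mat n n" "hermitian_mat A"
  shows "\<exists>U lam. unitary_mat n U \<and>
    A = U * mat_diag n (\<lambda>i. complex_of_real (lam i)) * mat_adjoint U"
  using assms
proof (induction n arbitrary: A)
  case 0
  then show ?case
    by (intro exI[of _ "1\<^sub>m 0"] exI[of _ "\<lambda>_. 0"] conjI)
      (auto simp: unitary_mat_def intro!: eq_matI)
next
  case (Suc n)
  note A = Suc.prems(1)
  obtain e v where v: "v \<in> carrier_vec (Suc n)" "v \<bullet>c v = 1" "A *\<^sub>v v = e \<cdot>\<^sub>v v"
    using unit_eigenvector_exists[OF A] by blast
  obtain W where W: "unitary_mat (Suc n) W" "col W 0 = v"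
    using unitary_mat_first_col[OF v(1,2)] by blast
  have Wc: "W \<in> carrier_mat (Suc n) (Suc n)" by (rule unitary_mat_carrier[OF W(1)])
  define A' where "A' = mat_adjoint W * A * W"
  have A'c: "A' \<in> carrier_mat (Suc n) (Suc n)"
    unfolding A'_def by (meson Wc A mat_adjoint_carrier mult_carrier_mat)
  have "col A' 0 = e \<cdot>\<^sub>v unit_vec (Suc n) 0"
    unfolding A'_def using unitary_conj_first_col[OF W(1) A] v(3) W(2) by simp
  then obtain r B where B: "B \<in> carrier_mat n n" "hermitian_mat B"
    "A' = four_block_mat (mat_diag 1 (\<lambda>_. complex_of_real r)) (0\<^sub>m 1 n) (0\<^sub>m n 1) B"
    using hermitian_mat_split_first_col[OF A'c
        hermitian_mat_unitary_conj[OF Wc A Suc.prems(2), folded A'_def]]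
    by blast
  obtain U lam where U: "unitary_mat n U"
    "B = U * mat_diag n (\<lambda>i. complex_of_real (lam i)) * mat_adjoint U"
    using Suc.IH[OF B(1,2)] by blast
  have Uc: "U \<in> carrier_mat n n" by (rule unitary_mat_carrier[OF U(1)])
  define V where "V = four_block_mat (1\<^sub>m 1) (0\<^sub>m 1 n) (0\<^sub>m n 1) U"
  define lam' where "lam' i = (if i = 0 then r else lam (i - 1))" for i
  define D where "D = mat_diag (Suc n) (\<lambda>i. complex_of_real (lam' i))"
  have Vc: "V \<in> carrier_mat (Suc n) (Suc n)"
    using four_block_carrier_mat[OF one_carrier_mat[of 1] Uc] by (simp add: V_def)
  have "V * D * mat_adjoint V = A'"
    unfolding V_def D_def four_block_unitary_conj_diag[OF Uc] B(3) U(2) by (simp add: lam'_def)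
  then have "A = W * (V * D * mat_adjoint V) * mat_adjoint W"
    unfolding A'_def by (simp add: unitary_conj_inverse[OF W(1) A])
  also have "\<dots> = (W * V) * D * mat_adjoint (W * V)"
    unfolding D_def by (rule conj_adjoint_compose[OF Wc Vc mat_diag_dim])
  finally show ?case
    using unitary_mat_mult[OF W(1) unitary_mat_four_block[OF U(1)]] unfolding D_def V_def by blast
qed

lemma unitary_diag_carrier:
  fixes U :: "complex mat"
  shows "U \<in> carrier_mat n n \<Longrightarrow> U * mat_diag n f * mat_adjoint U \<in> carrier_mat n n"
  by (meson mat_adjoint_carrier mat_diag_dim mult_carrier_mat)

lemma unitary_diag_index:
  fixes U :: "complex mat"
  assumes U: "U \<in> carrier_mat n n" and "a < n" "b < n"
  shows "(U * mat_diag n f * mat_adjoint U) $$ (a, b) =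
    (\<Sum>p<n. U $$ (a, p) * f p * cnj (U $$ (b, p)))"
proof -
  have "U * mat_diag n f = mat n n (\<lambda>(i, j). U $$ (i, j) * f j)"
    by (rule mat_diag_mult_right[OF U])
  then show ?thesis
    using assms by (simp add: scalar_prod_def lessThan_atLeast0)
qed

lemma unitary_diag_similar:
  assumes U: "unitary_mat n U"
  shows "similar_mat_wit (U * mat_diag n f * mat_adjoint U) (mat_diag n f) U (mat_adjoint U)"
  using unitary_mat_carrier[OF U]
  by (intro similar_mat_witI[of _ _ n] unitary_mat_adjoint_left[OF U]
      unitary_mat_adjoint_right[OF U])
    auto

lemma mat_diag_power: "mat_diag n f ^\<^sub>m k = mat_diag n (\<lambda>i. f i ^ k)"
  by (induction k) (simp_all add: power_commutes)

lemma unitary_diag_power: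
  assumes U: "unitary_mat n U"
  shows "(U * mat_diag n f * mat_adjoint U) ^\<^sub>m k = U * mat_diag n (\<lambda>i. f i ^ k) * mat_adjoint U"
  using similar_mat_wit_pow_id[OF unitary_diag_similar[OF U]] by (simp add: mat_diag_power)

lemma unitary_diag_smult:
  fixes U :: "complex mat"
  assumes U: "U \<in> carrier_mat n n"
  shows "c \<cdot>\<^sub>m (U * mat_diag n f * mat_adjoint U) = U * mat_diag n (\<lambda>i. c * f i) * mat_adjoint U"
proof (rule eq_matI)
  fix a b assume "a < dim_row (U * mat_diag n (\<lambda>i. c * f i) * mat_adjoint U)"
    "b < dim_col (U * mat_diag n (\<lambda>i. c * f i) * mat_adjoint U)"
  then have ab: "a < n" "b < n" using U by auto
  have "(c \<cdot>\<^sub>m (U * mat_diag n f * mat_adjoint U)) $$ (a, b) =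
      c * (U * mat_diag n f * mat_adjoint U) $$ (a, b)"
    using U ab by (simp del: index_mult_mat(1))
  also have "\<dots> = (U * mat_diag n (\<lambda>i. c * f i) * mat_adjoint U) $$ (a, b)"
    using U ab by (simp add: unitary_diag_index sum_distrib_left ac_simps del: index_mult_mat(1))
  finally show "(c \<cdot>\<^sub>m (U * mat_diag n f * mat_adjoint U)) $$ (a, b) =
      (U * mat_diag n (\<lambda>i. c * f i) * mat_adjoint U) $$ (a, b)" .
qed (use U in auto)

lemma exp_sums_complex: "(\<lambda>k. z ^ k / fact k) sums exp (z :: complex)"
  using exp_converges[of z] by (simp add: scaleR_conv_of_real field_simps)

lemma mat_exp_unitary_diag:
  assumes U: "unitary_mat n U"
  shows "mat_exp (U * mat_diag n f * mat_adjoint U) =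
    U * mat_diag n (\<lambda>i. exp (f i)) * mat_adjoint U"
proof (rule eq_matI)
  have Uc: "U \<in> carrier_mat n n" by (rule unitary_mat_carrier[OF U])
  fix a b assume "a < dim_row (U * mat_diag n (\<lambda>i. exp (f i)) * mat_adjoint U)"
    "b < dim_col (U * mat_diag n (\<lambda>i. exp (f i)) * mat_adjoint U)"
  then have ab: "a < n" "b < n" using Uc by auto
  have "(\<lambda>k. \<Sum>p<n. U $$ (a, p) * cnj (U $$ (b, p)) * (f p ^ k / fact k)) sums
      (\<Sum>p<n. U $$ (a, p) * cnj (U $$ (b, p)) * exp (f p))"
    by (intro sums_sum sums_mult exp_sums_complex)
  moreover have "((U * mat_diag n f * mat_adjoint U) ^\<^sub>m k) $$ (a, b) / of_nat (fact k) =
      (\<Sum>p<n. U $$ (a, p) * cnj (U $$ (b, p)) * (f p ^ k / fact k))" for k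
    using Uc ab
    by (simp add: unitary_diag_power[OF U] unitary_diag_index sum_divide_distrib ac_simps del:
        index_mult_mat(1))
  ultimately show "mat_exp (U * mat_diag n f * mat_adjoint U) $$ (a, b) =
      (U * mat_diag n (\<lambda>i. exp (f i)) * mat_adjoint U) $$ (a, b)"
    using Uc ab by (simp add: mat_exp_def sums_iff unitary_diag_index ac_simps del:
        index_mult_mat(1))
qed (use unitary_mat_carrier[OF U] in \<open>auto simp: mat_exp_def\<close>)

lemma diag_mat_mat_diag: "diag_mat (mat_diag n f) = map f [0..<n]"
  unfolding diag_mat_def mat_diag_dim_row_col by (rule map_cong) (auto simp: mat_diag_def)

lemma eigenvalue_unitary_diag_iff:
  assumes U: "unitary_mat n U"
  shows "eigenvalue (U * mat_diag n f * mat_adjoint U) x \<longleftrightarrow> (\<exists>p<n. x = f p)"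
proof -
  have Uc: "U \<in> carrier_mat n n" by (rule unitary_mat_carrier[OF U])
  have "char_poly (U * mat_diag n f * mat_adjoint U) = char_poly (mat_diag n f)"
    using unitary_diag_similar[OF U] by (intro char_poly_similar) (auto simp: similar_mat_def)
  also have "\<dots> = (\<Prod>a\<leftarrow>map f [0..<n]. [:- a, 1:])"
    using char_poly_upper_triangular[OF mat_diag_dim[of n f]]
    by (simp add: upper_triangular_def mat_diag_def diag_mat_mat_diag[unfolded mat_diag_def])
  finally show ?thesis
    using Uc by (subst eigenvalue_root_char_poly[of _ n])
      (auto simp: poly_prod_list prod_list_zero_iff o_def)
qed

lemma mat_diag_mult_vec_index:
  assumes "w \<in> carrier_vec n" "p < n"
  shows "(mat_diag n f *\<^sub>v w) $ p = f p * w $ p"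
proof -
  have "(mat_diag n f *\<^sub>v w) $ p = (\<Sum>i = 0..<n. (if p = i then f i else 0) * w $ i)"
    using assms by (simp add: mat_diag_def scalar_prod_def)
  also have "\<dots> = (\<Sum>i = 0..<n. if i = p then f p * w $ p else 0)"
    by (rule sum.cong) auto
  finally show ?thesis using assms by simp
qed

lemma unitary_diag_eigenvector_iff:
  assumes U: "unitary_mat n U" and v: "v \<in> carrier_vec n"
  shows "(U * mat_diag n f * mat_adjoint U) *\<^sub>v v = \<alpha> \<cdot>\<^sub>v v \<longleftrightarrow>
    (\<forall>p<n. (mat_adjoint U *\<^sub>v v) $ p \<noteq> 0 \<longrightarrow> f p = \<alpha>)"
proof -
  have Uc: "U \<in> carrier_mat n n" by (rule unitary_mat_carrier[OF U])
  have adjU: "mat_adjoint U \<in> carrier_mat n n" using Uc by simp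
  define w where "w = mat_adjoint U *\<^sub>v v"
  have w: "w \<in> carrier_vec n" using adjU v by (simp add: w_def)
  have v_w: "v = U *\<^sub>v w"
    using assoc_mult_mat_vec[OF Uc adjU v] v by (simp add: w_def unitary_mat_adjoint_right[OF U])
  have cancel: "mat_adjoint U *\<^sub>v (U *\<^sub>v x) = x" if "x \<in> carrier_vec n" for x
    using assoc_mult_mat_vec[OF adjU Uc that] that by (simp add: unitary_mat_adjoint_left[OF U])
  have "(U * mat_diag n f * mat_adjoint U) *\<^sub>v v = U *\<^sub>v (mat_diag n f *\<^sub>v w)"
    using assoc_mult_mat_vec[OF mult_carrier_mat[OF Uc mat_diag_dim] adjU v]
      assoc_mult_mat_vec[OF Uc mat_diag_dim w] by (simp add: w_def)
  moreover have "\<alpha> \<cdot>\<^sub>v v = U *\<^sub>v (\<alpha> \<cdot>\<^sub>v w)"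
    using Uc w by (simp add: v_w mult_mat_vec)
  ultimately have "(U * mat_diag n f * mat_adjoint U) *\<^sub>v v = \<alpha> \<cdot>\<^sub>v v \<longleftrightarrow>
      mat_diag n f *\<^sub>v w = \<alpha> \<cdot>\<^sub>v w"
    using cancel w by (metis mat_diag_dim mult_mat_vec_carrier smult_carrier_vec)
  also have "\<dots> \<longleftrightarrow> (\<forall>p<n. f p * w $ p = \<alpha> * w $ p)"
    using w by (simp add: vec_eq_iff mat_diag_mult_vec_index del: index_mult_mat_vec)
  also have "\<dots> \<longleftrightarrow> (\<forall>p<n. w $ p \<noteq> 0 \<longrightarrow> f p = \<alpha>)"
    by auto
  finally show ?thesis unfolding w_def .
qed

section \<open>Integrality of the eigenvalues\<close>

lemma eigenvalue_mat_power:
  fixes A :: "'a :: field mat"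
  assumes A: "A \<in> carrier_mat n n" and ev: "eigenvalue A x"
  shows "eigenvalue (A ^\<^sub>m k) (x ^ k)"
proof -
  obtain v where v: "v \<in> carrier_vec n" "v \<noteq> 0\<^sub>v n" "A *\<^sub>v v = x \<cdot>\<^sub>v v"
    using ev A unfolding eigenvalue_def eigenvector_def by auto
  have "A ^\<^sub>m k *\<^sub>v v = x ^ k \<cdot>\<^sub>v v"
  proof (induction k)
    case (Suc k)
    have "A ^\<^sub>m Suc k *\<^sub>v v = A ^\<^sub>m k *\<^sub>v (A *\<^sub>v v)"
      using A v by (simp add: assoc_mult_mat_vec[of _ n n _ n])
    also have "\<dots> = x ^ Suc k \<cdot>\<^sub>v v"
      using Suc by (simp add: v(3) mult_mat_vec[OF pow_carrier_mat[OF A] v(1)] smult_smult_assoc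
          mult.commute)
    finally show ?case .
  qed (use A v in simp)
  then show ?thesis
    using A v unfolding eigenvalue_def eigenvector_def by auto
qed

lemma algebraic_int_eigenvalue_int_mat:
  fixes B :: "int mat" and x :: complex
  assumes B: "B \<in> carrier_mat n n" and ev: "eigenvalue (map_mat of_int B) x"
  shows "algebraic_int x"
proof -
  have "poly (map_poly of_int (char_poly B)) x = 0"
    using ev B by (simp add: eigenvalue_root_char_poly[of _ n] of_int_hom.char_poly_hom[OF B,
        symmetric])
  moreover have "lead_coeff (char_poly B) = 1"
    using degree_monic_char_poly[OF B] by simp
  ultimately show ?thesis
    unfolding algebraic_int_altdef_ipoly by blast
qed

lemma algebraic_int_eigenvalue_power_int_mat:
  fixes B :: "int mat" and x :: complex
  assumes B: "B \<in> carrier_mat n n" and ev: "eigenvalue (map_mat of_int B) x"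
  shows "algebraic_int (x ^ k)"
proof -
  have "eigenvalue (map_mat of_int (B ^\<^sub>m k) :: complex mat) (x ^ k)"
    using eigenvalue_mat_power[OF _ ev, of n k] B by (simp add: of_int_hom.mat_hom_pow)
  then show ?thesis
    using B by (intro algebraic_int_eigenvalue_int_mat[of "B ^\<^sub>m k" n]) auto
qed

lemma sum_lessThan_mult:
  fixes r :: nat
  shows "(\<Sum>z<N * r. g z) = (\<Sum>j<N. \<Sum>t<r. g (j * r + t))"
proof -
  have "(\<Sum>z\<in>{j * r..<j * r + r}. g z) = (\<Sum>t<r. g (j * r + t))" for j
    using sum.shift_bounds_nat_ivl[of g 0 "j * r" r] by (simp add: atLeast0LessThan add.commute)
  then show ?thesis
    using sum.nat_group[of g r N] by simp
qed

lemma sum_distinct_list_delta: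
  assumes "distinct rs" "z \<in> set rs"
  shows "(\<Sum>t<length rs. if rs ! t = z then f (rs ! t) else 0) = f z"
proof -
  obtain t0 where t0: "t0 < length rs" "rs ! t0 = z"
    using assms(2) by (auto simp: in_set_conv_nth)
  have "(\<Sum>t<length rs. if rs ! t = z then f (rs ! t) else 0) =
      (\<Sum>t<length rs. if t = t0 then f z else 0)"
    using assms(1) t0 by (intro sum.cong) (auto simp: nth_eq_iff_index_eq)
  then show ?thesis using t0 by simp
qed

lemma mult_add_less_mult:
  fixes j t N r :: nat
  assumes "j < N" "t < r"
  shows "j * r + t < N * r"
proof -
  have "j * r + t < (j + 1) * r" using assms by simp
  also have "\<dots> \<le> N * r" using assms by (intro mult_le_mono1) simp
  finally show ?thesis .
qed

(* The adjacency matrix of the cover of the weighted graph of M by the values in rs: the vertex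
   (i, rs ! u), encoded as i * length rs + u, is joined to (j, M_ij * rs ! u). *)
definition cover_mat :: "complex mat \<Rightarrow> complex list \<Rightarrow> int mat" where
  "cover_mat M rs = mat (dim_row M * length rs) (dim_col M * length rs) (\<lambda>(y, z).
    let r = length rs; c = M $$ (y div r, z div r)
    in if c \<noteq> 0 \<and> c * rs ! (y mod r) = rs ! (z mod r) then 1 else 0)"

definition cover_vec :: "complex list \<Rightarrow> complex vec \<Rightarrow> complex vec" where
  "cover_vec rs v =
    vec (dim_vec v * length rs) (\<lambda>z. v $ (z div length rs) * rs ! (z mod length rs))"

lemma cover_vec_nonzero:
  assumes v: "v \<in> carrier_vec N" "v \<noteq> 0\<^sub>v N" and "1 \<in> set rs"
  shows "cover_vec rs v \<noteq> 0\<^sub>v (N * length rs)"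
proof -
  obtain i where i: "i < N" "v $ i \<noteq> 0"
    using v by (metis eq_vecI carrier_vecD index_zero_vec)
  obtain t where t: "t < length rs" "rs ! t = 1"
    using \<open>1 \<in> set rs\<close> by (auto simp: in_set_conv_nth)
  have "length rs > 0" using t(1) by linarith
  then have "(i * length rs + t) div length rs = i" "(i * length rs + t) mod length rs = t"
    using t(1) by simp_all
  then have "cover_vec rs v $ (i * length rs + t) \<noteq> 0"
    using mult_add_less_mult[OF i(1) t(1)] v i t by (simp add: cover_vec_def)
  then show ?thesis
    using mult_add_less_mult[OF i(1) t(1)] by auto
qed

lemma cover_mat_mult_cover_vec:
  fixes M :: "complex mat"
  assumes M: "M \<in> carrier_mat N N" and rs: "distinct rs"
    and closed: "\<And>i j z. i < N \<Longrightarrow> j < N \<Longrightarrow> M $$ (i, j) \<noteq> 0 \<Longrightarrow> z \<in> set rs \<Longrightarrow>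
      M $$ (i, j) * z \<in> set rs"
    and v: "v \<in> carrier_vec N" "M *\<^sub>v v = x \<cdot>\<^sub>v v"
  shows "map_mat of_int (cover_mat M rs) *\<^sub>v cover_vec rs v = x \<cdot>\<^sub>v cover_vec rs v"
proof (rule eq_vecI)
  define r B w where "r = length rs" and "B = map_mat (of_int :: int \<Rightarrow> complex) (cover_mat M rs)"
    and "w = cover_vec rs v"
  fix y assume "y < dim_vec (x \<cdot>\<^sub>v cover_vec rs v)"
  then have y: "y < N * r" using v by (simp add: cover_vec_def r_def)
  define i u where "i = y div r" and "u = y mod r"
  have "r > 0" using y by (cases r) auto
  then have i: "i < N" and u: "u < r" using y by (simp_all add: i_def u_def less_mult_imp_div_less)
  have dm: "(j * r + t) div r = j" "(j * r + t) mod r = t" if "t < r" for j t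
    using that \<open>r > 0\<close> by simp_all
  have inner: "(\<Sum>t<r. B $$ (y, j * r + t) * w $ (j * r + t)) = M $$ (i, j) * v $ j * rs ! u"
    if j: "j < N" for j
  proof (cases "M $$ (i, j) = 0")
    case True
    then show ?thesis
      using M v y mult_add_less_mult[OF j] dm by (simp add: B_def cover_mat_def i_def r_def)
  next
    case False
    have "(\<Sum>t<r. B $$ (y, j * r + t) * w $ (j * r + t)) =
        (\<Sum>t<r. if rs ! t = M $$ (i, j) * rs ! u then v $ j * rs ! t else 0)"
      using M v y mult_add_less_mult[OF j] dm False
      by (intro sum.cong) (auto simp: B_def cover_mat_def w_def cover_vec_def i_def u_def r_def)
    also have "\<dots> = v $ j * (M $$ (i, j) * rs ! u)"
      unfolding r_def using closed[OF i j False] u rs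
      by (intro sum_distinct_list_delta) (auto simp: r_def)
    finally show ?thesis by simp
  qed
  have "(B *\<^sub>v w) $ y = (\<Sum>z<N * r. B $$ (y, z) * w $ z)"
    using y M v by (simp add: B_def w_def cover_mat_def cover_vec_def r_def scalar_prod_def
        lessThan_atLeast0)
  also have "\<dots> = (\<Sum>j<N. M $$ (i, j) * v $ j * rs ! u)"
    by (simp add: sum_lessThan_mult inner)
  also have "\<dots> = rs ! u * (M *\<^sub>v v) $ i"
    using i M v(1) by (simp add: scalar_prod_def lessThan_atLeast0 sum_distrib_left mult_ac)
  also have "\<dots> = (x \<cdot>\<^sub>v w) $ y"
    using i y v by (simp add: w_def cover_vec_def i_def u_def r_def)
  finally show "(map_mat of_int (cover_mat M rs) *\<^sub>v cover_vec rs v) $ y =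
      (x \<cdot>\<^sub>v cover_vec rs v) $ y"
    by (simp add: B_def w_def)
qed (use M v in \<open>simp add: cover_mat_def cover_vec_def\<close>)

lemma cover_mat_eigenvalue:
  fixes M :: "complex mat"
  assumes M: "M \<in> carrier_mat N N" and rs: "distinct rs" "1 \<in> set rs"
    and closed: "\<And>i j z. i < N \<Longrightarrow> j < N \<Longrightarrow> M $$ (i, j) \<noteq> 0 \<Longrightarrow> z \<in> set rs \<Longrightarrow>
      M $$ (i, j) * z \<in> set rs"
    and ev: "eigenvalue M x"
  shows "eigenvalue (map_mat of_int (cover_mat M rs)) x"
proof -
  obtain v where v: "v \<in> carrier_vec N" "v \<noteq> 0\<^sub>v N" "M *\<^sub>v v = x \<cdot>\<^sub>v v"
    using ev M unfolding eigenvalue_def eigenvector_def by auto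
  show ?thesis
    unfolding eigenvalue_def eigenvector_def
    using cover_mat_mult_cover_vec[OF M rs(1) closed v(1,3)] cover_vec_nonzero[OF v(1,2) rs(2)] M v(1)
    by (intro exI[of _ "cover_vec rs v"]) (auto simp: cover_mat_def cover_vec_def)
qed

lemma roots_of_unity_mat_eigenvalue_algebraic_int:
  fixes M :: "complex mat"
  assumes M: "M \<in> carrier_mat N N" and "m > 0"
    and entries: "\<forall>i<N. \<forall>j<N. M $$ (i, j) = 0 \<or> M $$ (i, j) ^ m = 1"
    and ev: "eigenvalue M x"
  shows "algebraic_int (x ^ k)"
proof -
  obtain rs :: "complex list" where rs: "set rs = {z. z ^ m = 1}" "distinct rs"
    using finite_distinct_list[OF finite_roots_unity[of m]] \<open>m > 0\<close> by auto
  have "M $$ (i, j) * z \<in> set rs"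
    if "i < N" "j < N" "M $$ (i, j) \<noteq> 0" "z \<in> set rs" for i j z
    using entries that rs(1) by (auto simp: power_mult_distrib)
  then have "eigenvalue (map_mat of_int (cover_mat M rs)) x"
    using rs by (intro cover_mat_eigenvalue[OF M _ _ _ ev]) auto
  then show ?thesis
    using M by (intro algebraic_int_eigenvalue_power_int_mat[of _ "N * length rs"])
      (auto simp: cover_mat_def)
qed


section \<open>Commensurable real spectra\<close>

lemma Ints_if_square_mult_squarefree:
  fixes q :: rat and D :: nat
  assumes sf: "squarefree D" and int: "q\<^sup>2 * of_nat D \<in> \<int>"
  shows "q \<in> \<int>"
proof -
  obtain a b where ab: "quotient_of q = (a, b)" by (cases "quotient_of q") auto
  have b: "b > 0" using quotient_of_denom_pos[OF ab] .
  have coprime: "coprime a b" using quotient_of_coprime[OF ab] .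
  have q: "q = of_int a / of_int b" using quotient_of_div[OF ab] .
  obtain z where z: "q\<^sup>2 * of_nat D = of_int z" using int by (auto elim: Ints_cases)
  have "of_int (a\<^sup>2 * int D) = (of_int (z * b\<^sup>2) :: rat)"
    using z b unfolding q by (simp add: field_simps power2_eq_square)
  then have "b\<^sup>2 dvd a\<^sup>2 * int D" by (simp only: of_int_eq_iff) simp
  moreover have "coprime (b\<^sup>2) (a\<^sup>2)" using coprime by (simp add: coprime_commute)
  ultimately have "b\<^sup>2 dvd int D" using coprime_dvd_mult_right_iff by blast
  then have "int (nat b ^ 2) dvd int D" using b by simp
  then have "nat b dvd 1" using squarefreeD[OF sf] by (simp only: int_dvd_int_iff)
  then have "b = 1" using b by simp
  then show ?thesis unfolding q by simp
qed

lemma zero_sum_common_multiple: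
  fixes x :: "nat \<Rightarrow> real"
  assumes "N > 0" and diff: "\<forall>p<N. \<exists>k::int. x p - x 0 = c * k" and sum: "(\<Sum>p<N. x p) = 0"
  shows "\<exists>d. \<forall>p<N. \<exists>k::int. x p = d * k"
proof -
  have "\<forall>p. \<exists>k::int. p < N \<longrightarrow> x p - x 0 = c * k"
    using diff by blast
  then obtain k :: "nat \<Rightarrow> int" where kd: "\<And>p. p < N \<Longrightarrow> x p - x 0 = c * k p"
    using choice by metis
  have k: "x p = x 0 + c * k p" if "p < N" for p
    using kd[OF that] by (simp add: algebra_simps)
  define s where "s = (\<Sum>p<N. k p)"
  have "(\<Sum>p<N. x p) = (\<Sum>p<N. x 0 + c * k p)"
    by (intro sum.cong refl k) simp
  also have "\<dots> = real N * x 0 + c * s"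
    by (simp add: s_def sum.distrib sum_distrib_left)
  finally have x0: "x 0 = - c * s / real N" using sum \<open>N > 0\<close> by (simp add: field_simps)
  have "x p = c / real N * of_int (int N * k p - s)" if "p < N" for p
    using k[OF that] x0 \<open>N > 0\<close> by (simp add: field_simps)
  then show ?thesis by blast
qed

lemma common_multiple_sqrt_squarefree:
  fixes x :: "nat \<Rightarrow> real"
  assumes x: "\<forall>p<N. \<exists>k::int. x p = d * k" and squares: "(\<Sum>p<N. (x p)\<^sup>2) \<in> \<int>"
  shows "\<exists>\<Delta>::nat. \<Delta> > 0 \<and> squarefree \<Delta> \<and> (\<forall>p<N. \<exists>q::rat. x p = of_rat q * sqrt (real \<Delta>))"
proof (cases "\<forall>p<N. x p = 0")
  case True
  then show ?thesis by (intro exI[of _ 1]) (auto intro: exI[of _ 0])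
next
  case False
  then obtain p0 where p0: "p0 < N" "x p0 \<noteq> 0" by auto
  have "\<forall>p. \<exists>k::int. p < N \<longrightarrow> x p = d * k"
    using x by blast
  then obtain k :: "nat \<Rightarrow> int" where k: "\<And>p. p < N \<Longrightarrow> x p = d * k p"
    using choice by metis
  define K where "K = (\<Sum>p<N. (k p)\<^sup>2)"
  obtain S where S: "(\<Sum>p<N. (x p)\<^sup>2) = of_int S" using squares by (auto elim: Ints_cases)
  have dK: "d\<^sup>2 * K = S"
    using S k by (simp add: K_def power_mult_distrib sum_distrib_left)
  have "d \<noteq> 0" "k p0 \<noteq> 0" using k[OF p0(1)] p0(2) by auto
  have "(k p0)\<^sup>2 \<le> K" unfolding K_def using p0(1) by (intro member_le_sum) auto
  moreover have "(k p0)\<^sup>2 > 0" using \<open>k p0 \<noteq> 0\<close> by simp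
  ultimately have K: "K > 0" by linarith
  then have "d\<^sup>2 * K > 0" using \<open>d \<noteq> 0\<close> by simp
  then have "S > 0" using dK by simp
  \<comment> \<open>(d K)^2 = S K = \<Delta> f^2, so d is a rational multiple of sqrt \<Delta>\<close>
  define \<Delta> f where "\<Delta> = squarefree_part (nat (S * K))" and "f = square_part (nat (S * K))"
  have SK: "nat (S * K) = \<Delta> * f\<^sup>2" unfolding \<Delta>_def f_def by (rule squarefree_decompose)
  have "\<Delta> > 0" unfolding \<Delta>_def by (metis gr0I squarefree_part_nonzero)
  have "d\<^sup>2 = (real f * sqrt (real \<Delta>) / K)\<^sup>2"
  proof -
    have "d\<^sup>2 = real_of_int (S * K) / (of_int K)\<^sup>2"
      using dK K by (simp add: field_simps power2_eq_square)
    also have "real_of_int (S * K) = real (\<Delta> * f\<^sup>2)"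
      using SK \<open>S > 0\<close> K by (metis nat_0_le of_int_of_nat_eq of_nat_0_le_iff zero_le_mult_iff
          order_less_imp_le)
    finally show ?thesis by (simp add: power_mult_distrib power_divide)
  qed
  then obtain \<sigma> :: int where \<sigma>: "d = \<sigma> * (real f * sqrt (real \<Delta>) / K)"
    by (metis power2_eq_iff mult_1 mult_minus1 of_int_1 of_int_minus)
  have "x p = of_rat (of_int (\<sigma> * int f * k p) / of_int K) * sqrt (real \<Delta>)" if "p < N" for p
    unfolding k[OF that] \<sigma> using K by (simp add: of_rat_divide of_rat_mult field_simps)
  then show ?thesis
    using \<open>\<Delta> > 0\<close> squarefree_squarefree_part unfolding \<Delta>_def by blast
qed

lemma sqrt_multiples_of_commensurable:
  fixes x :: "nat \<Rightarrow> real"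
  assumes "N > 0" and diff: "\<forall>p<N. \<exists>k::int. x p - x 0 = c * k"
    and sum: "(\<Sum>p<N. x p) = 0" and squares: "(\<Sum>p<N. (x p)\<^sup>2) \<in> \<int>"
    and integral: "\<forall>p<N. (x p)\<^sup>2 \<in> \<rat> \<longrightarrow> (x p)\<^sup>2 \<in> \<int>"
  shows "\<exists>\<Delta>::nat. \<Delta> > 0 \<and> squarefree \<Delta> \<and> (\<forall>p<N. \<exists>k::int. x p = k * sqrt (real \<Delta>))"
proof -
  obtain d where "\<forall>p<N. \<exists>k::int. x p = d * k"
    using zero_sum_common_multiple[OF \<open>N > 0\<close> diff sum] by blast
  then obtain \<Delta> :: nat where \<Delta>: "\<Delta> > 0" "squarefree \<Delta>"
    and q: "\<forall>p<N. \<exists>q::rat. x p = of_rat q * sqrt (real \<Delta>)"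
    using common_multiple_sqrt_squarefree squares by blast
  have "\<exists>k::int. x p = k * sqrt (real \<Delta>)" if "p < N" for p
  proof -
    obtain q where xq: "x p = of_rat q * sqrt (real \<Delta>)" using q \<open>p < N\<close> by blast
    then have "(x p)\<^sup>2 = of_rat (q\<^sup>2 * of_nat \<Delta>)"
      by (simp add: power_mult_distrib of_rat_mult of_rat_power)
    then have "of_rat (q\<^sup>2 * of_nat \<Delta>) \<in> (\<int> :: real set)"
      using integral that by (metis Rats_of_rat)
    then have "q\<^sup>2 * of_nat \<Delta> \<in> \<int>"
      by (metis Ints_cases Ints_of_int of_rat_eq_iff of_rat_of_int_eq)
    then have "q \<in> \<int>" by (rule Ints_if_square_mult_squarefree[OF \<Delta>(2)])
    then show ?thesis using xq by (auto elim: Ints_cases)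
  qed
  then show ?thesis using \<Delta> by blast
qed

section \<open>Spectral description of the walk\<close>

lemma hermitian_mat_square_diag:
  assumes M: "M \<in> carrier_mat N N" and herm: "hermitian_mat M" and a: "a < N"
  shows "(M * M) $$ (a, a) = complex_of_real (\<Sum>b<N. (cmod (M $$ (a, b)))\<^sup>2)"
proof -
  have "dim_row M = N" using M by simp
  then have "M $$ (b, a) = cnj (M $$ (a, b))" if "b < N" for b
    using herm a that unfolding hermitian_mat_def by blast
  then show ?thesis
    using M a by (simp add: scalar_prod_def lessThan_atLeast0 complex_norm_square[unfolded
        of_real_power])
qed

lemma exp_i_real_eq_1_iff: "exp (\<i> * complex_of_real x) = 1 \<longleftrightarrow> (\<exists>k::int. x = 2 * pi * k)"
proof -
  have "exp (\<i> * complex_of_real x) = 1 \<longleftrightarrow> cos x = 1 \<and> sin x = 0"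
    by (simp add: cis_conv_exp[symmetric] complex_eq_iff)
  also have "\<dots> \<longleftrightarrow> cos x = 1"
    using sin_squared_eq[of x] by auto
  finally show ?thesis by (auto simp: cos_one_2pi_int mult_ac)
qed

lemma lagrange_basis_poly_exists:
  fixes S :: "'a :: field set"
  assumes S: "finite S" and \<mu>: "\<mu> \<in> S"
  shows "\<exists>L. degree L \<le> card S - 1 \<and> (\<forall>x\<in>S. poly L x = (if x = \<mu> then 1 else 0))"
proof -
  define L where "L = Polynomial.smult (inverse (\<Prod>\<nu>\<in>S - {\<mu>}. \<mu> - \<nu>)) (\<Prod>\<nu>\<in>S - {\<mu>}. [:- \<nu>, 1:])"
  have "degree L \<le> degree (\<Prod>\<nu>\<in>S - {\<mu>}. [:- \<nu>, 1:])"
    by (simp add: L_def)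
  also have "\<dots> \<le> (\<Sum>\<nu>\<in>S - {\<mu>}. degree [:- \<nu>, 1:])"
    using degree_prod_sum_le[of "S - {\<mu>}" "\<lambda>\<nu>. [:- \<nu>, 1:]"] S by (simp add: o_def)
  also have "\<dots> = card S - 1"
    using S \<mu> by simp
  finally have "degree L \<le> card S - 1" .
  moreover have "poly L x = (if x = \<mu> then 1 else 0)" if "x \<in> S" for x
  proof -
    have "poly L x = inverse (\<Prod>\<nu>\<in>S - {\<mu>}. \<mu> - \<nu>) * (\<Prod>\<nu>\<in>S - {\<mu>}. x - \<nu>)"
      by (simp add: L_def poly_prod)
    moreover have "(\<Prod>\<nu>\<in>S - {\<mu>}. \<mu> - \<nu>) \<noteq> 0"
      using S by simp
    moreover have "x \<noteq> \<mu> \<Longrightarrow> (\<Prod>\<nu>\<in>S - {\<mu>}. x - \<nu>) = 0"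
      using S that by (simp add: prod_zero_iff)
    ultimately show ?thesis by auto
  qed
  ultimately show ?thesis by blast
qed

definition walk_regular :: "nat \<Rightarrow> complex mat \<Rightarrow> bool" where
  "walk_regular n M \<longleftrightarrow>
    (\<forall>k \<in> {1..n - 1}. \<forall>i < n. \<forall>j < n. (M ^\<^sub>m k) $$ (i, i) = (M ^\<^sub>m k) $$ (j, j))"

locale unitary_diagonalization =
  fixes n :: nat and M U :: "complex mat" and lam :: "nat \<Rightarrow> real"
  assumes unitary: "unitary_mat n U"
    and diagonalization: "M = U * mat_diag n (\<lambda>i. complex_of_real (lam i)) * mat_adjoint U"
begin

lemma U_carrier: "U \<in> carrier_mat n n"
  by (rule unitary_mat_carrier[OF unitary])

lemma M_carrier: "M \<in> carrier_mat n n"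
  unfolding diagonalization by (rule unitary_diag_carrier[OF U_carrier])

lemma eigenvalue_iff: "eigenvalue M x \<longleftrightarrow> (\<exists>p<n. x = complex_of_real (lam p))"
  unfolding diagonalization by (rule eigenvalue_unitary_diag_iff[OF unitary])

lemma walk_eq:
  "walk M t = U * mat_diag n (\<lambda>p. exp (\<i> * complex_of_real (t * lam p))) * mat_adjoint U"
  unfolding walk_def diagonalization
  by (simp add: unitary_diag_smult[OF U_carrier] mat_exp_unitary_diag[OF unitary] mult.assoc)

lemma periodic_at_iff:
  assumes a: "a < n"
  shows "periodic_at M a \<longleftrightarrow>
    (\<exists>t::real. t \<noteq> 0 \<and>
      (\<exists>\<alpha>. \<forall>p<n. U $$ (a, p) \<noteq> 0 \<longrightarrow> exp (\<i> * complex_of_real (t * lam p)) = \<alpha>))"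
proof -
  have "(mat_adjoint U *\<^sub>v unit_vec n a) $ p \<noteq> 0 \<longleftrightarrow> U $$ (a, p) \<noteq> 0" if "p < n" for p
    using U_carrier a that by simp
  then show ?thesis
    using M_carrier unfolding periodic_at_def walk_eq
    by (simp add: unitary_diag_eigenvector_iff[OF unitary])
qed

lemma diag_power:
  assumes "a < n"
  shows "(M ^\<^sub>m k) $$ (a, a) = complex_of_real (\<Sum>p<n. (cmod (U $$ (a, p)))\<^sup>2 * lam p ^ k)"
proof -
  have "U $$ (a, p) * complex_of_real (lam p) ^ k * cnj (U $$ (a, p)) =
      complex_of_real ((cmod (U $$ (a, p)))\<^sup>2 * lam p ^ k)" for p
    unfolding of_real_mult of_real_power[of "lam p" k]
    by (simp add: complex_norm_square mult_ac del: of_real_power)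
  then have "(M ^\<^sub>m k) $$ (a, a) = (\<Sum>p<n. complex_of_real ((cmod (U $$ (a, p)))\<^sup>2 * lam p ^ k))"
    using U_carrier assms unfolding diagonalization
    by (simp add: unitary_diag_power[OF unitary] unitary_diag_index del: index_mult_mat(1)
        of_real_mult)
  then show ?thesis by simp
qed

lemma column_norm:
  assumes "p < n"
  shows "(\<Sum>a<n. (cmod (U $$ (a, p)))\<^sup>2) = 1"
proof -
  have "complex_of_real (\<Sum>a<n. (cmod (U $$ (a, p)))\<^sup>2) = (mat_adjoint U * U) $$ (p, p)"
    using U_carrier assms
    by (simp add: scalar_prod_def lessThan_atLeast0 complex_norm_square[unfolded of_real_power]
        mult_ac)
  also have "\<dots> = 1"
    using assms by (simp add: unitary_mat_adjoint_left[OF unitary])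
  finally show ?thesis by (simp only: of_real_eq_1_iff)
qed

lemma diag_poly:
  assumes "a < n"
  shows "(\<Sum>k\<le>degree L. complex_of_real (coeff L k) * (M ^\<^sub>m k) $$ (a, a)) =
    complex_of_real (\<Sum>p<n. (cmod (U $$ (a, p)))\<^sup>2 * poly L (lam p))"
proof -
  have "(\<Sum>p<n. (cmod (U $$ (a, p)))\<^sup>2 * poly L (lam p)) =
      (\<Sum>k\<le>degree L. coeff L k * (\<Sum>p<n. (cmod (U $$ (a, p)))\<^sup>2 * lam p ^ k))"
    unfolding poly_altdef by (simp add: sum_distrib_left mult_ac sum.swap[of _ "{..<n}"])
  then show ?thesis
    using assms by (simp add: diag_power)
qed

lemma walk_regular_spectral_weights:
  assumes wr: "walk_regular n M" and deg: "degree L \<le> n - 1" and ab: "a < n" "b < n"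
  shows "(\<Sum>p<n. (cmod (U $$ (a, p)))\<^sup>2 * poly L (lam p)) =
    (\<Sum>p<n. (cmod (U $$ (b, p)))\<^sup>2 * poly L (lam p))"
proof -
  have "(M ^\<^sub>m k) $$ (a, a) = (M ^\<^sub>m k) $$ (b, b)" if "k \<le> degree L" for k
  proof (cases "k = 0")
    case True
    then show ?thesis using M_carrier ab by simp
  next
    case False
    then have "k \<in> {1..n - 1}" using that deg by simp
    then show ?thesis using wr ab unfolding walk_regular_def by blast
  qed
  then have "complex_of_real (\<Sum>p<n. (cmod (U $$ (a, p)))\<^sup>2 * poly L (lam p)) =
      complex_of_real (\<Sum>p<n. (cmod (U $$ (b, p)))\<^sup>2 * poly L (lam p))"
    unfolding diag_poly[OF ab(1), symmetric] diag_poly[OF ab(2), symmetric] by simp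
  then show ?thesis by (simp only: of_real_eq_iff)
qed

lemma walk_regular_eigenvalue_supported:
  assumes wr: "walk_regular n M" and a: "a < n" and q: "q < n"
  shows "\<exists>p<n. lam p = lam q \<and> U $$ (a, p) \<noteq> 0"
proof -
  obtain L where deg: "degree L \<le> card (lam ` {..<n}) - 1"
    and L: "\<And>x. x \<in> lam ` {..<n} \<Longrightarrow> poly L x = (if x = lam q then 1 else 0)"
    using lagrange_basis_poly_exists[of "lam ` {..<n}" "lam q"] q by auto
  have "card (lam ` {..<n}) \<le> n" using card_image_le[of "{..<n}" lam] by simp
  then have deg': "degree L \<le> n - 1" using deg by linarith
  \<comment> \<open>the squared length of the projection of e_b onto the eigenspace of lam q; by
    walk-regularity it does not depend on b, and summed over b it is the multiplicity of lam q\<close>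
  define weight where "weight b = (\<Sum>p<n. (cmod (U $$ (b, p)))\<^sup>2 * poly L (lam p))" for b
  have "(\<Sum>b<n. weight b) = (\<Sum>p<n. \<Sum>b<n. (cmod (U $$ (b, p)))\<^sup>2 * poly L (lam p))"
    unfolding weight_def by (rule sum.swap)
  also have "\<dots> = (\<Sum>p<n. (\<Sum>b<n. (cmod (U $$ (b, p)))\<^sup>2) * poly L (lam p))"
    by (simp add: sum_distrib_right)
  also have "\<dots> = (\<Sum>p<n. poly L (lam p))"
    by (simp add: column_norm)
  also have "\<dots> \<ge> poly L (lam q)"
    using q L by (intro member_le_sum) auto
  finally have "1 \<le> (\<Sum>b<n. weight b)"
    using L q by simp
  also have "\<dots> = (\<Sum>b<n. weight a)"
    using walk_regular_spectral_weights[OF wr deg' _ a] by (intro sum.cong) (auto simp: weight_def)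
  also have "\<dots> = real n * weight a"
    by simp
  finally have "weight a \<noteq> 0" by auto
  then obtain p where "p < n" "(cmod (U $$ (a, p)))\<^sup>2 * poly L (lam p) \<noteq> 0"
    unfolding weight_def by (meson sum.neutral lessThan_iff)
  then show ?thesis using L by (auto split: if_splits)
qed

lemma trace_power: "(\<Sum>a<n. (M ^\<^sub>m k) $$ (a, a)) = complex_of_real (\<Sum>p<n. lam p ^ k)"
proof -
  have "(\<Sum>a<n. (M ^\<^sub>m k) $$ (a, a)) =
      (\<Sum>a<n. complex_of_real (\<Sum>p<n. (cmod (U $$ (a, p)))\<^sup>2 * lam p ^ k))"
    by (rule sum.cong[OF refl], rule diag_power) simp
  also have "\<dots> = complex_of_real (\<Sum>a<n. \<Sum>p<n. (cmod (U $$ (a, p)))\<^sup>2 * lam p ^ k)"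
    by (rule of_real_sum[symmetric])
  also have "(\<Sum>a<n. \<Sum>p<n. (cmod (U $$ (a, p)))\<^sup>2 * lam p ^ k) =
      (\<Sum>p<n. (\<Sum>a<n. (cmod (U $$ (a, p)))\<^sup>2) * lam p ^ k)"
    by (subst sum.swap) (simp add: sum_distrib_right)
  also have "\<dots> = (\<Sum>p<n. lam p ^ k)"
    by (rule sum.cong) (simp_all add: column_norm)
  finally show ?thesis .
qed

lemma periodic_at_if_sqrt_multiples:
  assumes "\<Delta> > 0" and sqrt: "\<forall>p<n. \<exists>k::int. lam p = k * sqrt (real \<Delta>)" and a: "a < n"
  shows "periodic_at M a"
proof -
  have "exp (\<i> * complex_of_real (2 * pi / sqrt \<Delta> * lam p)) = 1" if "p < n" for p
  proof -
    obtain k :: int where "lam p = k * sqrt \<Delta>" using sqrt \<open>p < n\<close> by blast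
    then have "2 * pi / sqrt \<Delta> * lam p = 2 * pi * k" using \<open>\<Delta> > 0\<close> by simp
    then show ?thesis unfolding exp_i_real_eq_1_iff by blast
  qed
  moreover have "2 * pi / sqrt \<Delta> \<noteq> 0" using \<open>\<Delta> > 0\<close> by simp
  ultimately show ?thesis
    unfolding periodic_at_iff[OF a] by blast
qed

lemma periodic_at_imp_commensurable:
  assumes wr: "walk_regular n M" and a: "a < n" and periodic: "periodic_at M a"
  shows "\<exists>c. \<forall>p<n. \<exists>k::int. lam p - lam 0 = c * k"
proof -
  obtain t \<alpha> where "t \<noteq> 0" and phase: "\<And>p. p < n \<Longrightarrow> U $$ (a, p) \<noteq> 0 \<Longrightarrow>
      exp (\<i> * complex_of_real (t * lam p)) = \<alpha>"
    using periodic unfolding periodic_at_iff[OF a] by blast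
  have all: "exp (\<i> * complex_of_real (t * lam q)) = \<alpha>" if "q < n" for q
    using walk_regular_eigenvalue_supported[OF wr a that] phase by metis
  have unit: "exp (\<i> * complex_of_real (t * (lam p - lam 0))) = 1" if "p < n" for p
  proof -
    have "exp (\<i> * complex_of_real (t * (lam p - lam 0))) =
        exp (\<i> * complex_of_real (t * lam p)) / exp (\<i> * complex_of_real (t * lam 0))"
      by (simp add: exp_diff[symmetric] algebra_simps)
    moreover have "\<alpha> \<noteq> 0" using all[of 0] a exp_not_eq_zero by (metis gr_zeroI not_less_zero)
    ultimately show ?thesis
      using all[OF that] all[of 0] a by simp
  qed
  have "\<exists>k::int. lam p - lam 0 = 2 * pi / t * k" if "p < n" for p
  proof -
    obtain k :: int where "t * (lam p - lam 0) = 2 * pi * k"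
      using unit[OF \<open>p < n\<close>] unfolding exp_i_real_eq_1_iff by blast
    then show ?thesis using \<open>t \<noteq> 0\<close> by (intro exI[of _ k]) (simp add: field_simps)
  qed
  then show ?thesis by blast
qed

lemma sum_eigenvalues:
  assumes "\<forall>i<n. M $$ (i, i) = 0"
  shows "(\<Sum>p<n. lam p) = 0"
proof -
  have "complex_of_real (\<Sum>p<n. lam p) = (\<Sum>a<n. M $$ (a, a))"
    using trace_power[of 1] M_carrier by simp
  also have "\<dots> = 0" using assms by simp
  finally show ?thesis by (simp only: of_real_eq_0_iff)
qed

lemma sum_squares_eigenvalues_Ints:
  assumes herm: "hermitian_mat M"
    and unimodular: "\<forall>i<n. \<forall>j<n. M $$ (i, j) = 0 \<or> cmod (M $$ (i, j)) = 1"
  shows "(\<Sum>p<n. (lam p)\<^sup>2) \<in> \<int>"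
proof -
  have "complex_of_real (\<Sum>p<n. (lam p)\<^sup>2) = (\<Sum>a<n. (M * M) $$ (a, a))"
    using trace_power[of 2] M_carrier by (simp add: numeral_2_eq_2)
  also have "\<dots> = complex_of_real (\<Sum>a<n. \<Sum>b<n. (cmod (M $$ (a, b)))\<^sup>2)"
    using hermitian_mat_square_diag[OF M_carrier herm] by simp
  finally have "(\<Sum>p<n. (lam p)\<^sup>2) = (\<Sum>a<n. \<Sum>b<n. (cmod (M $$ (a, b)))\<^sup>2)"
    by (simp only: of_real_eq_iff)
  moreover have "(cmod (M $$ (a, b)))\<^sup>2 \<in> \<int>" if "a < n" "b < n" for a b
    using unimodular that by (metis Ints_0 Ints_1 norm_zero one_power2 zero_power2)
  ultimately show ?thesis by (auto intro!: Ints_sum)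
qed


lemma eigenvalues_sqrt_multiples_iff:
  "(\<forall>ev. eigenvalue M ev \<longrightarrow> (\<exists>k::int. ev = of_int k * complex_of_real (sqrt (real \<Delta>)))) \<longleftrightarrow>
    (\<forall>p<n. \<exists>k::int. lam p = k * sqrt (real \<Delta>))"
proof -
  have "of_int k * complex_of_real y = complex_of_real (of_int k * y)" for y and k :: int
    by simp
  then have "complex_of_real x = of_int k * complex_of_real y \<longleftrightarrow> x = of_int k * y"
    for x y and k :: int
    by (simp only: of_real_eq_iff)
  then show ?thesis
    unfolding eigenvalue_iff by auto
qed

lemma periodic_at_imp_sqrt_multiples:
  assumes herm: "hermitian_mat M" and wr: "walk_regular n M" and "m > 0"
    and diag: "\<forall>i<n. M $$ (i, i) = 0"
    and entries: "\<forall>i<n. \<forall>j<n. M $$ (i, j) = 0 \<or> M $$ (i, j) ^ m = 1"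
    and a: "a < n" and periodic: "periodic_at M a"
  shows "\<exists>\<Delta>::nat. \<Delta> > 0 \<and> squarefree \<Delta> \<and> (\<forall>p<n. \<exists>k::int. lam p = k * sqrt (real \<Delta>))"
proof -
  have "\<forall>i<n. \<forall>j<n. M $$ (i, j) = 0 \<or> cmod (M $$ (i, j)) = 1"
    using entries power_eq_1_iff \<open>m > 0\<close> by (metis not_gr_zero)
  moreover have "(lam p)\<^sup>2 \<in> \<int>" if "p < n" "(lam p)\<^sup>2 \<in> \<rat>" for p
  proof -
    have "algebraic_int ((complex_of_real (lam p))\<^sup>2)"
      using roots_of_unity_mat_eigenvalue_algebraic_int[OF M_carrier \<open>m > 0\<close> entries]
        eigenvalue_iff that(1) by blast
    then show ?thesis
      using rational_algebraic_int_is_int that(2) by (simp flip: of_real_power)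
  qed
  moreover obtain c where "\<forall>p<n. \<exists>k::int. lam p - lam 0 = c * k"
    using periodic_at_imp_commensurable[OF wr a periodic] by blast
  ultimately show ?thesis
    using a by (intro sqrt_multiples_of_commensurable[of n lam c])
      (auto simp: sum_eigenvalues[OF diag] sum_squares_eigenvalues_Ints[OF herm])
qed

end

theorem lemma10p1:
  fixes M :: "complex mat" and N m :: nat
  assumes "m > 0" and "N > 0"
    and "M \<in> carrier_mat N N"
    and "hermitian_mat M"
    and "\<forall>i < N. M $$ (i, i) = 0"
    and "\<forall>i < N. \<forall>j < N. i \<noteq> j \<longrightarrow> M $$ (i, j) = 0 \<or> (M $$ (i, j)) ^ m = 1"
    and "\<forall>k \<in> {1..N - 1}. \<forall>i < N. \<forall>j < N. (M ^\<^sub>m k) $$ (i, i) = (M ^\<^sub>m k) $$ (j, j)"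
  shows "((\<exists>a < N. periodic_at M a) \<longleftrightarrow> (\<forall>a < N. periodic_at M a))
    \<and> ((\<forall>a < N. periodic_at M a) \<longleftrightarrow>
         (\<exists>\<Delta>::nat. \<Delta> > 0 \<and> squarefree \<Delta> \<and>
            (\<forall>ev. eigenvalue M ev \<longrightarrow> (\<exists>k::int. ev = of_int k * complex_of_real (sqrt (real \<Delta>))))))"
proof -
  obtain U lam where "unitary_mat N U"
    "M = U * mat_diag N (\<lambda>i. complex_of_real (lam i)) * mat_adjoint U"
    using hermitian_mat_unitary_diagonalization[OF assms(3,4)] by blast
  then interpret unitary_diagonalization N M U lam
    by unfold_locales
  have entries: "\<forall>i<N. \<forall>j<N. M $$ (i, j) = 0 \<or> M $$ (i, j) ^ m = 1"
    using assms(5,6) by (metis (full_types))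
  have "\<exists>\<Delta>::nat. \<Delta> > 0 \<and> squarefree \<Delta> \<and> (\<forall>p<N. \<exists>k::int. lam p = k * sqrt (real \<Delta>))"
    if "a < N" "periodic_at M a" for a
    using periodic_at_imp_sqrt_multiples[OF assms(4) _ assms(1,5) entries that] assms(7)
    unfolding walk_regular_def by blast
  moreover have "\<forall>a<N. periodic_at M a"
    if "\<Delta> > 0" "\<forall>p<N. \<exists>k::int. lam p = k * sqrt (real \<Delta>)" for \<Delta> :: nat
    using periodic_at_if_sqrt_multiples that by blast
  ultimately show ?thesis
    unfolding eigenvalues_sqrt_multiples_iff using assms(2) by blast
qed

end
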